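(* For every integer $0\le i\le s-1$, $$\sigma_2\big((I\otimes A_H)\,G_i\,(I\otimes A_H)\big)\le\sigma_2(G)+2\sigma_2(H)+\sigma_2(H)^2.$$
   Context: $G$ is a $d_1$-regular undirected graph on $[n]$ with normalized adjacency matrix $A_G$ and a locally invertible rotation map $\mathrm{rot}_G:[n]\times[d_1]\to[n]\times[d_1]$ ($\mathrm{rot}_G(v,j)=(v',j')$ iff $v'$ is the $j$-th neighbour of $v$ and $v$ is the $j'$-th neighbour of $v'$, and $j'=\varphi(j)$ for a fixed bijection $\varphi$ of $[d_1]$). $H$ is a $d_2$-regular undirected graph on vertex set $[d_1]^s$ with normalized adjacency matrix $A_H$. $\mathrm{Rot}_i:[n]\times[d_1]^s\to[n]\times[d_1]^s$ sends $(v,(a_0,\dots,a_{s-1}))$ to $(v',(a_0,\dots,a_{i-1},a_i',a_{i+1},\dots,a_{s-1}))$ where $(v',a_i')=\mathrm{rot}_G(v,a_i)$, and $G_i$ is the permutation matrix realizing $\mathrm{Rot}_i$ on $\mathbb R^{V(G)}\otimes\mathbb R^{V(H)}$. $\sigma_2(X)$ is the second largest singular value of $X$; $\sigma_2(G)=\sigma_2(A_G)$, $\sigma_2(H)=\sigma_2(A_H)$. *)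

theory Defs
  imports "HOL-Analysis.Analysis" "HOL-Computational_Algebra.Polynomial"
begin

definition charpoly :: "real^'n^'n \<Rightarrow> real poly" where
  "charpoly M = det (\<chi> i j. (if i = j then [:0, 1:] else 0) - [:M $ i $ j:])"

definition singular_values :: "real^'n^'m \<Rightarrow> real list" where
  "singular_values X = map sqrt (rev (sorted_list_of_multiset (proots (charpoly (transpose X ** X)))))"

definition sigma2 :: "real^'n^'m \<Rightarrow> real" where
  "sigma2 X = (if length (singular_values X) < 2 then 0 else singular_values X ! 1)"

text \<open>Rotation map axioms for a d1-regular graph on vertex type 'v with edge labels 'l
  (d1 = CARD('l)); locally invertible with fixed bijection phi.\<close>
definition rotation_map :: "('v \<times> 'l \<Rightarrow> 'v \<times> 'l) \<Rightarrow> bool" where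
  "rotation_map rot \<longleftrightarrow> (\<forall>x. rot (rot x) = x)"

definition locally_invertible :: "('v \<times> 'l \<Rightarrow> 'v \<times> 'l) \<Rightarrow> bool" where
  "locally_invertible rot \<longleftrightarrow> (\<exists>\<phi>. bij \<phi> \<and> (\<forall>v j. snd (rot (v, j)) = \<phi> j))"

definition rot_adj :: "('v::finite \<times> 'l::finite \<Rightarrow> 'v \<times> 'l) \<Rightarrow> real^'v^'v" where
  "rot_adj rot = (\<chi> v v'. real (card {j. fst (rot (v, j)) = v'}) / real CARD('l))"

text \<open>A d-regular undirected (multi)graph on a finite vertex type, given by symmetric
  edge multiplicities (a loop at v is counted in m v v).\<close>
definition regular_graph :: "nat \<Rightarrow> ('a::finite \<Rightarrow> 'a \<Rightarrow> nat) \<Rightarrow> bool" where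
  "regular_graph d m \<longleftrightarrow> (\<forall>x y. m x y = m y x) \<and> (\<forall>x. (\<Sum>y\<in>UNIV. m x y) = d)"

definition norm_adj :: "nat \<Rightarrow> ('a::finite \<Rightarrow> 'a \<Rightarrow> nat) \<Rightarrow> real^'a^'a" where
  "norm_adj d m = (\<chi> x y. real (m x y) / real d)"

definition kron :: "real^'b^'a \<Rightarrow> real^'d^'c \<Rightarrow> real^('b \<times> 'd)^('a \<times> 'c)" where
  "kron A B = (\<chi> p q. A $ fst p $ fst q * B $ snd p $ snd q)"

text \<open>Rot_i on [n] x [d1]^s, coordinates of [d1]^s indexed by the finite type 's.\<close>
definition Rot :: "('v \<times> 'l \<Rightarrow> 'v \<times> 'l) \<Rightarrow> 's::finite \<Rightarrow> 'v \<times> ('l^'s) \<Rightarrow> 'v \<times> ('l^'s)" where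
  "Rot rot i = (\<lambda>(v, a). let (v', a') = rot (v, a $ i) in (v', (\<chi> k. if k = i then a' else a $ k)))"

definition perm_mat :: "('a::finite \<Rightarrow> 'a) \<Rightarrow> real^'a^'a" where
  "perm_mat f = (\<chi> x y. if x = f y then 1 else 0)"

end

theory Submission
  imports Defs
begin

text \<open>Write \<open>I \<otimes> A\<^sub>H = J + E\<close>, where \<open>J = I \<otimes> J\<^sub>H\<close> averages every cloud \<open>{v} \<times> [d\<^sub>1]\<^sup>s\<close> and
  \<open>E = I \<otimes> (A\<^sub>H - J\<^sub>H)\<close>. For \<open>x \<perp> \<one>\<close> the vector \<open>(I \<otimes> A\<^sub>H) G\<^sub>i (I \<otimes> A\<^sub>H) x\<close> splits as
  \<open>J G\<^sub>i J x + E G\<^sub>i J x + (I \<otimes> A\<^sub>H) G\<^sub>i E x\<close>. Since the first coordinate of \<open>Rot\<^sub>i(v, a)\<close> depends only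
  on \<open>a\<^sub>i\<close>, which is uniformly distributed over the cloud, \<open>J G\<^sub>i J\<close> acts on cloud-constant vectors
  as \<open>A\<^sub>G\<close>; hence the first term has norm at most \<open>\<sigma>\<^sub>2(G) \<parallel>x\<parallel>\<close>. The doubly stochastic matrix \<open>A\<^sub>H\<close> is
  a contraction and \<open>E\<close> has norm at most \<open>\<sigma>\<^sub>2(H)\<close>, so the other two terms are at most \<open>\<sigma>\<^sub>2(H) \<parallel>x\<parallel>\<close>
  each. Finally, by the Courant--Fischer principle, a bound on \<open>\<parallel>X x\<parallel>/\<parallel>x\<parallel>\<close> over a hyperplane
  bounds \<open>\<sigma>\<^sub>2(X)\<close>; this, like the characterisation of singular values through eigenvalues of
  \<open>X\<^sup>T X\<close>, rests on the spectral theorem for symmetric matrices.\<close>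

section \<open>Spectral theorem for symmetric matrices\<close>

lemma symmetric_matrix_inner_commute:
  fixes S :: "real^'n^'n"
  assumes "transpose S = S"
  shows "x \<bullet> (S *v y) = (S *v x) \<bullet> y"
proof -
  have "x \<bullet> (S *v y) = (x v* S) \<bullet> y" by (simp add: dot_lmul_matrix)
  also have "x v* S = S *v x" by (metis assms vector_transpose_matrix)
  finally show ?thesis .
qed

lemma linear_le_quadratic_imp_zero:
  fixes b C :: real
  assumes "\<And>t. 2 * t * b \<le> t^2 * C"
  shows "b = 0"
proof (rule ccontr)
  assume nz: "b \<noteq> 0"
  define a where "a = \<bar>C\<bar> + 1"
  have pos: "a > 0" by (simp add: a_def)
  define t where "t = b / a"
  have "2 * t * b \<le> t^2 * C" by (rule assms)
  also have "\<dots> \<le> t^2 * a" unfolding a_def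
    by (intro mult_left_mono) auto
  finally have "2 * t * b \<le> t^2 * a" .
  hence "2 * b * b / a \<le> b * b / a" using pos by (simp add: t_def power2_eq_square field_simps)
  hence "2 * b * b \<le> b * b" using pos by (simp add: divide_right_mono_neg field_simps)
  moreover have "b * b > 0" using nz by (metis linorder_neqE_linordered_idom mult_neg_neg mult_pos_pos)
  ultimately show False by simp
qed

text \<open>A maximiser \<open>x\<close> of \<open>x \<bullet> S x\<close> on the unit sphere of \<open>W\<close> is an eigenvector: moving along
  \<open>x + t y\<close> with \<open>y \<in> W\<close>, \<open>y \<perp> x\<close>, the first-order term \<open>2 t (y \<bullet> S x)\<close> must vanish, so
  \<open>S x - (x \<bullet> S x) x\<close>, which lies in \<open>W\<close> and is orthogonal to \<open>x\<close>, is orthogonal to itself.\<close>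

lemma symmetric_invariant_subspace_has_eigenvector:
  fixes S :: "real^'n^'n"
  assumes sym: "transpose S = S"
    and sub: "subspace W" and nz: "W \<noteq> {0}" and inv: "\<And>x. x \<in> W \<Longrightarrow> S *v x \<in> W"
  shows "\<exists>x\<in>W. norm x = 1 \<and> S *v x = (x \<bullet> (S *v x)) *\<^sub>R x"
proof -
  let ?K = "W \<inter> sphere 0 1"
  have cK: "compact ?K"
    using sub by (simp add: closed_subspace closed_Int_compact compact_sphere)
  obtain w where w: "w \<in> W" "w \<noteq> 0" using nz sub subspace_0 by blast
  hence "w /\<^sub>R norm w \<in> ?K" using sub by (simp add: subspace_scale)
  hence neK: "?K \<noteq> {}" by blast
  have cont: "continuous_on ?K (\<lambda>x. x \<bullet> (S *v x))"
    by (intro continuous_intros)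
  obtain x where x: "x \<in> ?K" and xmax: "\<And>y. y \<in> ?K \<Longrightarrow> y \<bullet> (S *v y) \<le> x \<bullet> (S *v x)"
    using continuous_attains_sup[OF cK neK cont] by auto
  define l where "l = x \<bullet> (S *v x)"
  have xW: "x \<in> W" and nx: "norm x = 1" using x by auto
  have xx: "x \<bullet> x = 1" using nx by (simp add: norm_eq_1)
  have orth: "y \<bullet> (S *v x) = 0" if yW: "y \<in> W" and yx: "y \<bullet> x = 0" for y
  proof (rule linear_le_quadratic_imp_zero)
    fix t
    define v where "v = x + t *\<^sub>R y"
    have vW: "v \<in> W" using xW yW sub by (simp add: v_def subspace_add subspace_scale)
    have vv: "v \<bullet> v = 1 + t^2 * (y \<bullet> y)"
      using xx yx by (simp add: v_def inner_add_left inner_add_right inner_commute power2_eq_square)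
    have "v \<bullet> v > 0" using vv by (smt (verit) inner_ge_zero mult_nonneg_nonneg zero_le_power2)
    hence nv: "norm v > 0" by (simp add: norm_eq_sqrt_inner)
    have "v /\<^sub>R norm v \<in> ?K" using vW sub nv by (simp add: subspace_scale)
    hence "(v /\<^sub>R norm v) \<bullet> (S *v (v /\<^sub>R norm v)) \<le> l" using xmax l_def by blast
    hence "(v \<bullet> (S *v v)) / (norm v)^2 \<le> l"
      by (simp add: matrix_vector_mult_scaleR power2_eq_square divide_inverse mult_ac)
    hence "v \<bullet> (S *v v) \<le> l * (v \<bullet> v)"
      using nv by (simp add: divide_le_eq power2_norm_eq_inner mult.commute)
    moreover have "v \<bullet> (S *v v) = l + 2 * t * (y \<bullet> (S *v x)) + t^2 * (y \<bullet> (S *v y))"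
      using symmetric_matrix_inner_commute[OF sym, of x y]
      by (simp add: v_def l_def matrix_vector_mult_add_rdistrib matrix_vector_mult_scaleR
            inner_add_left inner_add_right power2_eq_square algebra_simps inner_commute)
    ultimately show "2 * t * (y \<bullet> (S *v x)) \<le> t^2 * (l * (y \<bullet> y) - y \<bullet> (S *v y))"
      using vv by (simp add: algebra_simps power2_eq_square)
  qed
  define z where "z = S *v x - l *\<^sub>R x"
  have zW: "z \<in> W" using inv[OF xW] xW sub by (simp add: z_def subspace_diff subspace_scale)
  have "z \<bullet> x = (S *v x) \<bullet> x - l * (x \<bullet> x)" by (simp add: z_def inner_diff_left)
  hence zx: "z \<bullet> x = 0" using xx by (simp add: l_def inner_commute)
  have "z \<bullet> z = z \<bullet> (S *v x) - l * (z \<bullet> x)" by (simp add: z_def inner_diff_right)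
  also have "\<dots> = 0" using orth[OF zW zx] zx by simp
  finally have "z = 0" by simp
  thus ?thesis using xW nx by (auto simp: z_def l_def)
qed

lemma symmetric_orthonormal_eigenvectors:
  fixes S :: "real^'n^'n"
  assumes sym: "transpose S = S"
  shows "m \<le> CARD('n) \<Longrightarrow> \<exists>f::nat \<Rightarrow> real^'n. \<exists>d::nat \<Rightarrow> real.
     (\<forall>k<m. \<forall>l<m. f k \<bullet> f l = (if k = l then 1 else 0)) \<and> (\<forall>k<m. S *v f k = d k *\<^sub>R f k)"
proof (induction m)
  case 0 show ?case by auto
next
  case (Suc m)
  then obtain f d where orth: "\<forall>k<m. \<forall>l<m. f k \<bullet> f l = (if k = l then 1 else 0)"
    and eig: "\<forall>k<m. S *v f k = d k *\<^sub>R f k" by auto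
  define W where "W = {x. \<forall>k<m. f k \<bullet> x = 0}"
  have sub: "subspace W" by (auto simp: W_def subspace_def inner_add_right)
  have "dim (f ` {..<m}) \<le> card (f ` {..<m})" by (rule dim_le_card') simp
  also have "\<dots> \<le> m" using card_image_le[of "{..<m}" f] by simp
  also have "\<dots> < DIM(real^'n)" using Suc.prems by simp
  finally obtain x where x0: "x \<noteq> 0" and xo: "\<And>y. y \<in> span (f ` {..<m}) \<Longrightarrow> orthogonal x y"
    using orthogonal_to_subspace_exists by blast
  have "x \<in> W" unfolding W_def
  proof (intro CollectI allI impI)
    fix k assume "k < m"
    hence "orthogonal x (f k)" by (intro xo span_base) auto
    thus "f k \<bullet> x = 0" by (simp add: orthogonal_def inner_commute)
  qed
  hence nz: "W \<noteq> {0}" using x0 by auto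
  have inv: "S *v x \<in> W" if "x \<in> W" for x
    unfolding W_def
  proof (intro CollectI allI impI)
    fix k assume k: "k < m"
    have "f k \<bullet> (S *v x) = (S *v f k) \<bullet> x" by (rule symmetric_matrix_inner_commute[OF sym])
    also have "\<dots> = d k * (f k \<bullet> x)" using eig k by simp
    also have "\<dots> = 0" using that k by (simp add: W_def)
    finally show "f k \<bullet> (S *v x) = 0" .
  qed
  obtain e where eW: "e \<in> W" and ne: "norm e = 1" and ee: "S *v e = (e \<bullet> (S *v e)) *\<^sub>R e"
    using symmetric_invariant_subspace_has_eigenvector[OF sym sub nz inv] by blast
  have e1: "e \<bullet> e = 1" using ne by (simp add: norm_eq_1)
  have fe: "f k \<bullet> e = 0" "e \<bullet> f k = 0" if "k < m" for k
    using eW that by (auto simp: W_def inner_commute)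
  show ?case
  proof (intro exI conjI allI impI)
    fix k l assume k: "k < Suc m" and l: "l < Suc m"
    show "(f(m := e)) k \<bullet> (f(m := e)) l = (if k = l then 1 else 0)"
      using k l orth fe e1 by (cases "k = m"; cases "l = m") auto
  next
    fix k assume k: "k < Suc m"
    show "S *v (f(m := e)) k = (d(m := e \<bullet> (S *v e))) k *\<^sub>R (f(m := e)) k"
      using k eig ee by (cases "k = m") auto
  qed
qed

lemma symmetric_orthonormal_eigenbasis:
  fixes S :: "real^'n^'n"
  assumes sym: "transpose S = S"
  obtains q :: "'n \<Rightarrow> real^'n" and d :: "'n \<Rightarrow> real"
  where "\<And>k l. q k \<bullet> q l = (if k = l then 1 else 0)" "\<And>k. S *v q k = d k *\<^sub>R q k"
proof -
  obtain f :: "nat \<Rightarrow> real^'n" and d where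
    orth: "\<forall>k<CARD('n). \<forall>l<CARD('n). f k \<bullet> f l = (if k = l then 1 else 0)"
    and eig: "\<forall>k<CARD('n). S *v f k = d k *\<^sub>R f k"
    using symmetric_orthonormal_eigenvectors[OF sym, of "CARD('n)"] by auto
  obtain h :: "'n \<Rightarrow> nat" where h: "bij_betw h UNIV {0..<CARD('n)}"
    using ex_bij_betw_finite_nat[of "UNIV :: 'n set"] by auto
  have hr: "h k < CARD('n)" for k using h by (auto simp: bij_betw_def)
  have hi: "h k = h l \<longleftrightarrow> k = l" for k l using h by (auto simp: bij_betw_def inj_on_def)
  show ?thesis
    by (rule that[of "\<lambda>k. f (h k)" "\<lambda>k. d (h k)"]) (use orth eig hr hi in auto)
qed

section \<open>Orthonormal eigenbases and the characteristic polynomial\<close>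

definition columns_mat :: "('n::finite \<Rightarrow> real^'m::finite) \<Rightarrow> real^'n^'m" where
  "columns_mat q = (\<chi> i k. q k $ i)"

lemma columns_mat_mult_vec: "columns_mat q *v z = (\<Sum>k\<in>UNIV. (z $ k) *\<^sub>R q k)"
  by (simp add: columns_mat_def vec_eq_iff matrix_vector_mult_def sum_component mult.commute)

lemma transpose_columns_mat_mult_vec: "transpose (columns_mat q) *v y = (\<chi> k. q k \<bullet> y)"
  by (simp add: columns_mat_def vec_eq_iff matrix_vector_mult_def transpose_def inner_vec_def)

lemma mat_mult_vec: "mat t *v y = t *\<^sub>R (y::real^'n)"
  by (simp add: vec_eq_iff matrix_vector_mult_def mat_def if_distrib if_distribR cong del: if_weak_cong)

lemma poly_det: "poly (det A) t = det (\<chi> i j. poly (A $ i $ j) t)"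
  unfolding det_def by (simp add: poly_sum poly_prod)

locale onb =
  fixes q :: "'n::finite \<Rightarrow> real^'n"
  assumes orthonormal: "\<And>k l. q k \<bullet> q l = (if k = l then 1 else 0)"
begin

lemma columns_mat_mult_transpose: "columns_mat q ** transpose (columns_mat q) = mat 1"
proof -
  have "transpose (columns_mat q) ** columns_mat q = mat 1"
    by (simp add: vec_eq_iff matrix_matrix_mult_def columns_mat_def transpose_def mat_def
        orthonormal[symmetric] inner_vec_def)
  thus ?thesis using matrix_left_right_inverse by blast
qed

lemma expand: "y = (\<Sum>k\<in>UNIV. (q k \<bullet> y) *\<^sub>R q k)"
proof -
  have "y = (columns_mat q ** transpose (columns_mat q)) *v y"
    by (simp add: columns_mat_mult_transpose)
  also have "\<dots> = columns_mat q *v (transpose (columns_mat q) *v y)"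
    by (simp only: matrix_vector_mul_assoc)
  finally show ?thesis unfolding transpose_columns_mat_mult_vec columns_mat_mult_vec by simp
qed

lemma inner_expand: "x \<bullet> y = (\<Sum>k\<in>UNIV. (q k \<bullet> x) * (q k \<bullet> y))"
proof -
  have "x \<bullet> y = x \<bullet> (\<Sum>k\<in>UNIV. (q k \<bullet> y) *\<^sub>R q k)" using expand by metis
  thus ?thesis by (simp add: inner_sum_right inner_commute mult.commute)
qed

lemma det_diagonalised:
  "det (columns_mat q ** (\<chi> i j. if i = j then g i else 0) ** transpose (columns_mat q))
     = (\<Prod>k\<in>UNIV. g k)"
proof -
  let ?Q = "columns_mat q"
  have "det (?Q ** (\<chi> i j. if i = j then g i else 0) ** transpose ?Q)
      = det (\<chi> i j. if i = j then g i else 0) * det (?Q ** transpose ?Q)"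
    by (simp add: det_mul)
  also have "\<dots> = (\<Prod>k\<in>UNIV. g k)"
    by (simp add: columns_mat_mult_transpose det_I, subst det_diagonal) auto
  finally show ?thesis .
qed

lemma diagonalised_mult_vec:
  "(columns_mat q ** (\<chi> i j. if i = j then g i else 0) ** transpose (columns_mat q)) *v y
     = (\<Sum>k\<in>UNIV. (g k * (q k \<bullet> y)) *\<^sub>R q k)"
proof -
  have "(columns_mat q ** (\<chi> i j. if i = j then g i else 0) ** transpose (columns_mat q)) *v y
      = columns_mat q *v ((\<chi> i j. if i = j then g i else 0) *v (transpose (columns_mat q) *v y))"
    by (simp only: matrix_vector_mul_assoc matrix_mul_assoc)
  also have "(\<chi> i j. if i = j then g i else 0) *v (transpose (columns_mat q) *v y)
      = (\<chi> k. g k * (q k \<bullet> y))"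
    unfolding transpose_columns_mat_mult_vec
    by (simp add: vec_eq_iff matrix_vector_mult_def if_distrib if_distribR cong del: if_weak_cong)
  finally show ?thesis by (simp add: columns_mat_mult_vec)
qed

end

locale eigenbasis = onb q for q :: "'n::finite \<Rightarrow> real^'n" +
  fixes S :: "real^'n^'n" and d :: "'n \<Rightarrow> real"
  assumes eigen: "\<And>k. S *v q k = d k *\<^sub>R q k"
begin

lemma eigenvalue_eq: "d k = q k \<bullet> (S *v q k)"
  using orthonormal[of k k] by (simp add: eigen)

lemma mult_vec_expand: "S *v y = (\<Sum>k\<in>UNIV. (d k * (q k \<bullet> y)) *\<^sub>R q k)"
proof -
  have "S *v y = S *v (\<Sum>k\<in>UNIV. (q k \<bullet> y) *\<^sub>R q k)" using expand by metis
  also have "\<dots> = (\<Sum>k\<in>UNIV. (q k \<bullet> y) *\<^sub>R (S *v q k))"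
    by (simp add: linear_sum[OF matrix_vector_mul_linear] matrix_vector_mult_scaleR o_def)
  finally show ?thesis by (simp add: eigen mult.commute)
qed

lemma quadratic_form_expand: "y \<bullet> (S *v y) = (\<Sum>k\<in>UNIV. d k * (q k \<bullet> y)^2)"
  by (simp add: mult_vec_expand inner_sum_right inner_commute power2_eq_square mult_ac)

lemma charpoly_eq_prod: "charpoly S = (\<Prod>k\<in>UNIV. [:- d k, 1:])"
proof -
  have "poly (charpoly S) t = poly (\<Prod>k\<in>UNIV. [:- d k, 1:]) t" for t
  proof -
    let ?D = "\<chi> i j. if i = j then t - d i else (0::real)"
    have "poly (charpoly S) t = det (mat t - S)"
      unfolding charpoly_def poly_det by (intro arg_cong[where f=det]) (simp add: vec_eq_iff mat_def)
    also have "mat t - S = columns_mat q ** ?D ** transpose (columns_mat q)"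
    proof (subst matrix_eq, intro allI)
      fix y
      have "(mat t - S) *v y = t *\<^sub>R y - S *v y"
        by (simp add: matrix_vector_mult_diff_rdistrib mat_mult_vec)
      also have "\<dots> = t *\<^sub>R (\<Sum>k\<in>UNIV. (q k \<bullet> y) *\<^sub>R q k) - (\<Sum>k\<in>UNIV. (d k * (q k \<bullet> y)) *\<^sub>R q k)"
        using expand[of y, symmetric] mult_vec_expand[of y, symmetric] by simp
      also have "\<dots> = (\<Sum>k\<in>UNIV. ((t - d k) * (q k \<bullet> y)) *\<^sub>R q k)"
        by (simp add: scaleR_sum_right sum_subtractf[symmetric] scaleR_diff_left left_diff_distrib)
      also have "\<dots> = (columns_mat q ** ?D ** transpose (columns_mat q)) *v y"
        by (rule diagonalised_mult_vec[symmetric])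
      finally show "(mat t - S) *v y = (columns_mat q ** ?D ** transpose (columns_mat q)) *v y" .
    qed
    also have "det (columns_mat q ** ?D ** transpose (columns_mat q)) = (\<Prod>k\<in>UNIV. t - d k)"
      by (rule det_diagonalised)
    finally show ?thesis by (simp add: poly_prod)
  qed
  thus ?thesis by (intro poly_eq_poly_eq_iff[THEN iffD1] ext)
qed

lemma proots_charpoly: "proots (charpoly S) = image_mset d (mset_set UNIV)"
proof -
  have "(\<Sum>k\<in>A. {#d k#}) = image_mset d (mset_set A)" for A :: "'n set"
    by (induction A rule: infinite_finite_induct) auto
  thus ?thesis unfolding charpoly_eq_prod by (subst proots_prod) auto
qed

end


section \<open>The second singular value\<close>

definition desc_values :: "('n::finite \<Rightarrow> real) \<Rightarrow> real list" where
  "desc_values d = rev (sorted_list_of_multiset (image_mset d (mset_set UNIV)))"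

lemma length_desc_values: "length (desc_values (d :: 'n::finite \<Rightarrow> real)) = CARD('n)"
  by (simp add: desc_values_def flip: size_mset)

lemma desc_values_second:
  fixes d :: "'n::finite \<Rightarrow> real"
  assumes "CARD('n) \<ge> 2"
  obtains k1 k2 where "k1 \<noteq> k2" "desc_values d ! 1 \<le> d k1" "d k2 = desc_values d ! 1"
    "\<And>k. k \<noteq> k1 \<Longrightarrow> d k \<le> desc_values d ! 1"
proof -
  let ?L = "desc_values d"
  define M where "M = image_mset d (mset_set (UNIV::'n set))"
  have mL: "mset ?L = M" by (simp add: desc_values_def M_def)
  obtain a b rest where L: "?L = a # b # rest"
    using length_desc_values[of d] assms by (cases ?L rule: remdups_adj.cases) auto
  have "a \<in># M" using mL L by (metis list.set_intros(1) set_mset_mset)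
  then obtain k1 where k1: "d k1 = a" by (auto simp: M_def)
  define M' where "M' = image_mset d (mset_set (UNIV - {k1}))"
  have "mset_set (UNIV::'n set) = add_mset k1 (mset_set (UNIV - {k1}))"
    by (simp add: mset_set.remove)
  hence "M = add_mset a M'" by (simp add: M_def M'_def k1)
  hence mr: "mset (b # rest) = M'" using mL L by simp
  hence "b \<in># M'" by (metis list.set_intros(1) set_mset_mset)
  then obtain k2 where k2: "k2 \<noteq> k1" "d k2 = b" by (auto simp: M'_def)
  have "sorted (rev rest @ [b, a])" using L by (metis desc_values_def rev.simps rev_rev_ident
      append.assoc append_Cons append_Nil sorted_sorted_list_of_multiset)
  hence ba: "b \<le> a" and rb: "\<And>x. x \<in> set rest \<Longrightarrow> x \<le> b"
    by (auto simp: sorted_append)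
  have "d k \<le> b" if "k \<noteq> k1" for k
  proof -
    have "d k \<in># M'" using that by (auto simp: M'_def)
    hence "d k \<in> set (b # rest)" using mr by (metis set_mset_mset)
    thus ?thesis using rb by auto
  qed
  thus ?thesis using that[of k1 k2] k1 k2 ba L by auto
qed

lemma inner_mult_vec_self:
  fixes X :: "real^'n^'m"
  shows "(X *v y) \<bullet> (X *v y) = y \<bullet> ((transpose X ** X) *v y)"
proof -
  have "(X *v y) \<bullet> (X *v y) = ((X *v y) v* X) \<bullet> y" by (simp add: dot_lmul_matrix)
  also have "(X *v y) v* X = transpose X *v (X *v y)" by simp
  also have "\<dots> = (transpose X ** X) *v y" by (simp only: matrix_vector_mul_assoc)
  finally show ?thesis by (simp only: inner_commute)
qed

lemma sigma2_eigenbasis: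
  fixes X :: "real^'n^'m"
  obtains q :: "'n \<Rightarrow> real^'n" and d where "eigenbasis q (transpose X ** X) d"
    and "sigma2 X = (if CARD('n) < 2 then 0 else sqrt (desc_values d ! 1))"
proof -
  have "transpose (transpose X ** X) = transpose X ** X"
    by (simp add: matrix_transpose_mul)
  then obtain q :: "'n \<Rightarrow> real^'n" and d where "eigenbasis q (transpose X ** X) d"
    using symmetric_orthonormal_eigenbasis by (metis eigenbasis.intro eigenbasis_axioms.intro onb.intro)
  moreover from this have "singular_values X = map sqrt (desc_values d)"
    by (simp add: singular_values_def desc_values_def eigenbasis.proots_charpoly)
  ultimately show ?thesis using that length_desc_values[of d] by (simp add: sigma2_def)
qed

lemma sigma2_nonneg:
  fixes X :: "real^'n^'m"
  shows "sigma2 X \<ge> 0"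
proof -
  obtain q d where E: "eigenbasis q (transpose X ** X) d"
    and \<sigma>: "sigma2 X = (if CARD('n) < 2 then 0 else sqrt (desc_values d ! 1))"
    by (rule sigma2_eigenbasis)
  interpret eigenbasis q "transpose X ** X" d by (rule E)
  show ?thesis
  proof (cases "CARD('n) < 2")
    case False
    then obtain k2 where "d k2 = desc_values d ! 1"
      using desc_values_second[of d] by (metis not_less)
    moreover have "d k2 = (X *v q k2) \<bullet> (X *v q k2)"
      by (simp only: eigenvalue_eq inner_mult_vec_self)
    ultimately show ?thesis using False \<sigma> by (metis inner_ge_zero real_sqrt_ge_zero)
  qed (simp add: \<sigma>)
qed

lemma exists_unit_combination_orthogonal:
  fixes x1 x2 u :: "'a::real_inner"
  obtains a b :: real where "a^2 + b^2 > 0" "(a *\<^sub>R x1 + b *\<^sub>R x2) \<bullet> u = 0"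
proof -
  define a where "a = (if x2 \<bullet> u = 0 \<and> x1 \<bullet> u = 0 then 1 else x2 \<bullet> u)"
  define b where "b = (if x2 \<bullet> u = 0 \<and> x1 \<bullet> u = 0 then 0 else - (x1 \<bullet> u))"
  have "a^2 + b^2 > 0" unfolding a_def b_def by (auto simp: sum_power2_gt_zero_iff)
  moreover have "(a *\<^sub>R x1 + b *\<^sub>R x2) \<bullet> u = 0"
    unfolding a_def b_def by (auto simp: inner_add_left)
  ultimately show ?thesis by (rule that)
qed

text \<open>Courant--Fischer, upper half: the plane spanned by the top two eigenvectors of \<open>X\<^sup>T X\<close>
  meets every hyperplane \<open>u\<^sup>\<perp>\<close>.\<close>

lemma sigma2_le_if_norm_le_on_hyperplane:
  fixes X :: "real^'n^'m"
  assumes c: "c \<ge> 0" and bound: "\<And>x. x \<bullet> u = 0 \<Longrightarrow> norm (X *v x) \<le> c * norm x"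
  shows "sigma2 X \<le> c"
proof -
  obtain q :: "'n \<Rightarrow> real^'n" and d where E: "eigenbasis q (transpose X ** X) d"
    and \<sigma>: "sigma2 X = (if CARD('n) < 2 then 0 else sqrt (desc_values d ! 1))"
    by (rule sigma2_eigenbasis)
  interpret eigenbasis q "transpose X ** X" d by (rule E)
  let ?ev = "desc_values d ! 1"
  show ?thesis
  proof (cases "CARD('n) < 2")
    case False
    then obtain k1 k2 where k12: "k1 \<noteq> k2" "?ev \<le> d k1" "d k2 = ?ev"
      using desc_values_second[of d] by (metis not_less)
    obtain a b where ab: "a^2 + b^2 > 0" and xu: "(a *\<^sub>R q k1 + b *\<^sub>R q k2) \<bullet> u = 0"
      by (rule exists_unit_combination_orthogonal)
    define x where "x = a *\<^sub>R q k1 + b *\<^sub>R q k2"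
    have o: "q k1 \<bullet> q k1 = 1" "q k2 \<bullet> q k2 = 1" "q k1 \<bullet> q k2 = 0" "q k2 \<bullet> q k1 = 0"
      using orthonormal k12(1) by auto
    have xx: "x \<bullet> x = a^2 + b^2"
      unfolding x_def by (simp add: inner_add_left inner_add_right o power2_eq_square)
    have "(transpose X ** X) *v x = (a * d k1) *\<^sub>R q k1 + (b * d k2) *\<^sub>R q k2"
      unfolding x_def by (simp only: matrix_vector_right_distrib matrix_vector_mult_scaleR eigen scaleR_scaleR)
    hence "(X *v x) \<bullet> (X *v x) = d k1 * a^2 + d k2 * b^2"
      unfolding inner_mult_vec_self by (simp add: x_def inner_add_left inner_add_right o power2_eq_square)
    moreover have "(X *v x) \<bullet> (X *v x) \<le> c^2 * (x \<bullet> x)"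
      using bound[OF xu[folded x_def]] c
      by (metis norm_ge_zero power2_norm_eq_inner power_mono power_mult_distrib)
    moreover have "?ev * (a^2 + b^2) \<le> d k1 * a^2 + d k2 * b^2"
      using k12 by (simp add: algebra_simps mult_right_mono)
    ultimately have "?ev * (a^2 + b^2) \<le> c^2 * (a^2 + b^2)" unfolding xx by linarith
    hence "?ev \<le> c^2" using ab by (simp add: mult_le_cancel_right_pos)
    hence "sqrt ?ev \<le> c" using c real_sqrt_le_mono by fastforce
    thus ?thesis using False \<sigma> by simp
  qed (simp add: \<sigma> c)
qed

lemma card_ge_2_if_orthogonal_nonzero:
  fixes x1 x2 :: "real^'n"
  assumes "x1 \<bullet> x2 = 0" "x1 \<noteq> 0" "x2 \<noteq> 0"
  shows "CARD('n) \<ge> 2"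
proof (rule ccontr)
  assume "\<not> CARD('n) \<ge> 2"
  moreover have "CARD('n) > 0" by simp
  ultimately have "CARD('n) = 1" by linarith
  then obtain i :: 'n where U: "UNIV = {i}" using card_1_singletonE by blast
  have nonzero: "x $ i \<noteq> 0" if "x \<noteq> 0" for x :: "real^'n"
    using that by (simp add: vec_eq_iff) (metis UNIV_I U singletonD)
  have "x1 \<bullet> x2 = x1 $ i * x2 $ i" by (simp add: inner_vec_def U)
  thus False using assms nonzero by simp
qed

text \<open>Courant--Fischer, lower half: a plane on which \<open>\<parallel>X x\<parallel> \<ge> c \<parallel>x\<parallel>\<close> contains a vector
  orthogonal to the top eigenvector of \<open>X\<^sup>T X\<close>.\<close>

lemma sigma2_ge_if_norm_ge_on_plane:
  fixes X :: "real^'n^'m"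
  assumes o12: "x1 \<bullet> x2 = 0" and n1: "x1 \<noteq> 0" and n2: "x2 \<noteq> 0" and c: "c \<ge> 0"
    and bound: "\<And>a b. c * norm (a *\<^sub>R x1 + b *\<^sub>R x2) \<le> norm (X *v (a *\<^sub>R x1 + b *\<^sub>R x2))"
  shows "c \<le> sigma2 X"
proof -
  obtain q :: "'n \<Rightarrow> real^'n" and d where E: "eigenbasis q (transpose X ** X) d"
    and \<sigma>: "sigma2 X = (if CARD('n) < 2 then 0 else sqrt (desc_values d ! 1))"
    by (rule sigma2_eigenbasis)
  interpret eigenbasis q "transpose X ** X" d by (rule E)
  let ?ev = "desc_values d ! 1"
  have card: "CARD('n) \<ge> 2" by (rule card_ge_2_if_orthogonal_nonzero[OF o12 n1 n2])
  then obtain k1 where k1: "\<And>k. k \<noteq> k1 \<Longrightarrow> d k \<le> ?ev"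
    using desc_values_second[of d] by metis
  obtain a b where ab: "a^2 + b^2 > 0" and yq: "(a *\<^sub>R x1 + b *\<^sub>R x2) \<bullet> q k1 = 0"
    by (rule exists_unit_combination_orthogonal)
  define y where "y = a *\<^sub>R x1 + b *\<^sub>R x2"
  have "y \<noteq> 0"
  proof
    assume "y = 0"
    hence "0 = y \<bullet> y" by simp
    also have "\<dots> = a^2 * (x1 \<bullet> x1) + b^2 * (x2 \<bullet> x2)"
      using o12 unfolding y_def
      by (simp add: inner_add_left inner_add_right inner_commute[of x2 x1] power2_eq_square algebra_simps)
    finally show False using ab n1 n2
      by (smt (verit, best) inner_gt_zero_iff mult_nonneg_nonneg mult_pos_pos zero_le_power2
          power2_less_eq_zero_iff)
  qed
  hence ypos: "y \<bullet> y > 0" by simp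
  have "(X *v y) \<bullet> (X *v y) = (\<Sum>k\<in>UNIV. d k * (q k \<bullet> y)^2)"
    by (simp only: inner_mult_vec_self quadratic_form_expand)
  also have "\<dots> \<le> (\<Sum>k\<in>UNIV. ?ev * (q k \<bullet> y)^2)"
  proof (rule sum_mono)
    fix k
    show "d k * (q k \<bullet> y)^2 \<le> ?ev * (q k \<bullet> y)^2"
      using k1[of k] yq by (cases "k = k1") (auto simp: y_def inner_commute mult_right_mono)
  qed
  also have "\<dots> = ?ev * (y \<bullet> y)"
    by (simp add: inner_expand[of y y] sum_distrib_left power2_eq_square)
  finally have up: "(X *v y) \<bullet> (X *v y) \<le> ?ev * (y \<bullet> y)" .
  have "c * norm y \<le> norm (X *v y)" unfolding y_def by (rule bound)
  hence "c^2 * (y \<bullet> y) \<le> (X *v y) \<bullet> (X *v y)" using c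
    by (metis mult_nonneg_nonneg norm_ge_zero power2_norm_eq_inner power_mono power_mult_distrib)
  hence "c^2 * (y \<bullet> y) \<le> ?ev * (y \<bullet> y)" using up by linarith
  hence "c^2 \<le> ?ev" using ypos by (simp add: mult_le_cancel_right_pos)
  hence "c \<le> sqrt ?ev" using c real_le_rsqrt by blast
  thus ?thesis using card \<sigma> by simp
qed

section \<open>Doubly stochastic matrices\<close>

lemma norm_le_scaled_iff:
  fixes x :: "'a::real_inner" and y :: "'b::real_inner"
  assumes "0 \<le> c"
  shows "norm y \<le> c * norm x \<longleftrightarrow> y \<bullet> y \<le> c^2 * (x \<bullet> x)"
proof -
  have "norm y \<le> c * norm x \<longleftrightarrow> norm y \<le> norm (c *\<^sub>R x)" using assms by simp
  also have "\<dots> \<longleftrightarrow> y \<bullet> y \<le> (c *\<^sub>R x) \<bullet> (c *\<^sub>R x)" by (rule norm_le)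
  finally show ?thesis by (simp add: power2_eq_square mult.assoc)
qed

lemma scaled_norm_le_iff:
  fixes x :: "'a::real_inner" and y :: "'b::real_inner"
  assumes "0 \<le> c"
  shows "c * norm x \<le> norm y \<longleftrightarrow> c^2 * (x \<bullet> x) \<le> y \<bullet> y"
proof -
  have "c * norm x \<le> norm y \<longleftrightarrow> norm (c *\<^sub>R x) \<le> norm y" using assms by simp
  also have "\<dots> \<longleftrightarrow> (c *\<^sub>R x) \<bullet> (c *\<^sub>R x) \<le> y \<bullet> y" by (rule norm_le)
  finally show ?thesis by (simp add: power2_eq_square mult.assoc)
qed

definition doubly_stochastic :: "real^'a^'a \<Rightarrow> bool" where
  "doubly_stochastic A \<longleftrightarrow>
     (\<forall>i j. A$i$j \<ge> 0) \<and> (\<forall>i. (\<Sum>j\<in>UNIV. A$i$j) = 1) \<and> (\<forall>j. (\<Sum>i\<in>UNIV. A$i$j) = 1)"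

lemma weighted_mean_square_le:
  fixes w z :: "'a::finite \<Rightarrow> real"
  assumes w0: "\<And>j. w j \<ge> 0" and w1: "(\<Sum>j\<in>UNIV. w j) = 1"
  shows "(\<Sum>j\<in>UNIV. w j * z j)^2 \<le> (\<Sum>j\<in>UNIV. w j * (z j)^2)"
proof -
  define m where "m = (\<Sum>j\<in>UNIV. w j * z j)"
  have "0 \<le> (\<Sum>j\<in>UNIV. w j * (z j - m)^2)"
    using w0 by (intro sum_nonneg) simp
  also have "(\<Sum>j\<in>UNIV. w j * (z j - m)^2) = (\<Sum>j\<in>UNIV. w j * (z j)^2 - 2 * m * (w j * z j) + m^2 * w j)"
    by (rule sum.cong) (simp_all add: power2_eq_square algebra_simps)
  also have "\<dots> = (\<Sum>j\<in>UNIV. w j * (z j)^2) - 2 * m * m + m^2 * 1"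
    by (simp add: sum.distrib sum_subtractf sum_distrib_left[symmetric] m_def w1)
  finally show ?thesis by (simp add: m_def power2_eq_square)
qed

lemma inner_self_vec: "x \<bullet> (x::real^'n) = (\<Sum>i\<in>UNIV. (x$i)^2)"
  by (simp add: inner_vec_def power2_eq_square)

lemma inner_one_vec: "z \<bullet> (1::real^'a::finite) = (\<Sum>i\<in>UNIV. z$i)"
  by (simp add: inner_vec_def)

lemma doubly_stochastic_norm_le:
  fixes A :: "real^'a::finite^'a"
  assumes "doubly_stochastic A"
  shows "norm (A *v z) \<le> norm z"
proof -
  have "(A *v z) \<bullet> (A *v z) = (\<Sum>i\<in>UNIV. (\<Sum>j\<in>UNIV. A$i$j * z$j)^2)"
    by (simp add: inner_self_vec matrix_vector_mult_def)
  also have "\<dots> \<le> (\<Sum>i\<in>UNIV. (\<Sum>j\<in>UNIV. A$i$j * (z$j)^2))"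
    using assms unfolding doubly_stochastic_def by (intro sum_mono weighted_mean_square_le) auto
  also have "\<dots> = (\<Sum>j\<in>UNIV. (\<Sum>i\<in>UNIV. A$i$j) * (z$j)^2)"
    by (subst sum.swap) (simp add: sum_distrib_right)
  also have "\<dots> = z \<bullet> z" using assms by (simp add: doubly_stochastic_def inner_self_vec)
  finally show ?thesis by (simp add: norm_le)
qed

lemma doubly_stochastic_mult_one: "doubly_stochastic A \<Longrightarrow> A *v 1 = (1 :: real^'a::finite)"
  by (simp add: doubly_stochastic_def vec_eq_iff matrix_vector_mult_def)

lemma doubly_stochastic_inner_one:
  fixes A :: "real^'a::finite^'a"
  assumes "doubly_stochastic A"
  shows "(A *v z) \<bullet> 1 = z \<bullet> 1"
proof -
  have "(A *v z) \<bullet> 1 = (\<Sum>i\<in>UNIV. \<Sum>j\<in>UNIV. A$i$j * z$j)"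
    by (simp add: inner_one_vec matrix_vector_mult_def)
  also have "\<dots> = (\<Sum>j\<in>UNIV. (\<Sum>i\<in>UNIV. A$i$j) * z$j)"
    by (subst sum.swap) (simp add: sum_distrib_right)
  also have "\<dots> = z \<bullet> 1" using assms by (simp add: doubly_stochastic_def inner_one_vec)
  finally show ?thesis .
qed

text \<open>\<open>A\<close> fixes \<open>\<one>\<close> and maps \<open>\<one>\<^sup>\<perp>\<close> into itself, so on the plane spanned by \<open>\<one>\<close> and \<open>z\<close> it
  stretches no vector less than it stretches \<open>z\<close>; Courant--Fischer then applies.\<close>

lemma doubly_stochastic_norm_le_sigma2:
  fixes A :: "real^'a::finite^'a"
  assumes ds: "doubly_stochastic A" and z1: "z \<bullet> 1 = 0"
  shows "norm (A *v z) \<le> sigma2 A * norm z"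
proof (cases "z = 0")
  case False
  define c where "c = norm (A *v z) / norm z"
  have nz: "norm z > 0" using False by simp
  have c0: "c \<ge> 0" by (simp add: c_def)
  have cz: "norm (A *v z) = c * norm z" using nz by (simp add: c_def)
  have "c \<le> 1" using doubly_stochastic_norm_le[OF ds, of z] nz by (simp add: c_def)
  hence c2: "c^2 \<le> 1" using c0 by (simp add: power_le_one)
  have one0: "(1::real^'a) \<noteq> 0" by (simp add: vec_eq_iff)
  have "c \<le> sigma2 A"
  proof (rule sigma2_ge_if_norm_ge_on_plane[OF _ one0 False c0])
    show "1 \<bullet> z = 0" using z1 by (simp add: inner_commute)
    fix a b :: real
    let ?w = "a *\<^sub>R 1 + b *\<^sub>R z"
    have Az1: "(A *v z) \<bullet> 1 = 0" using doubly_stochastic_inner_one[OF ds, of z] z1 by simp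
    have ww: "?w \<bullet> ?w = a^2 * (1 \<bullet> (1::real^'a)) + b^2 * (z \<bullet> z)"
      using z1 by (simp add: inner_add_left inner_add_right inner_commute power2_eq_square algebra_simps)
    have Aw_eq: "A *v ?w = a *\<^sub>R 1 + b *\<^sub>R (A *v z)"
      by (simp add: matrix_vector_right_distrib matrix_vector_mult_scaleR doubly_stochastic_mult_one[OF ds])
    have Aw: "(A *v ?w) \<bullet> (A *v ?w) = a^2 * (1 \<bullet> (1::real^'a)) + b^2 * ((A *v z) \<bullet> (A *v z))"
      unfolding Aw_eq using Az1
      by (simp add: inner_add_left inner_add_right inner_commute power2_eq_square algebra_simps)
    have "(A *v z) \<bullet> (A *v z) = c^2 * (z \<bullet> z)"
      using cz by (simp add: power2_norm_eq_inner[symmetric] power_mult_distrib)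
    moreover have "c^2 * (a^2 * (1 \<bullet> (1::real^'a))) \<le> a^2 * (1 \<bullet> (1::real^'a))"
      using c2 by (simp add: mult_left_le_one_le)
    ultimately have "c^2 * (?w \<bullet> ?w) \<le> (A *v ?w) \<bullet> (A *v ?w)"
      unfolding ww Aw by (simp add: algebra_simps)
    thus "c * norm ?w \<le> norm (A *v ?w)" by (simp add: scaled_norm_le_iff[OF c0])
  qed
  thus ?thesis using cz nz by (simp add: mult_right_mono)
qed simp

definition uniform_mat :: "real^'b::finite^'b" where
  "uniform_mat = (\<chi> a b. 1 / real CARD('b))"

lemma uniform_mat_mult_vec:
  "uniform_mat *v w = (\<Sum>b\<in>UNIV. w $ b / real CARD('b)) *\<^sub>R (1::real^'b::finite)"
  by (simp add: vec_eq_iff uniform_mat_def matrix_vector_mult_def)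

lemma doubly_stochastic_uniform_mat: "doubly_stochastic (uniform_mat :: real^'b::finite^'b)"
  by (simp add: doubly_stochastic_def uniform_mat_def)

lemma uniform_mat_complement:
  fixes w :: "real^'b::finite"
  shows "(w - uniform_mat *v w) \<bullet> 1 = 0" and "norm (w - uniform_mat *v w) \<le> norm w"
proof -
  define m where "m = (\<Sum>b\<in>UNIV. w $ b / real CARD('b))"
  have u: "uniform_mat *v w = m *\<^sub>R 1" by (simp add: uniform_mat_mult_vec m_def)
  have "(w - m *\<^sub>R 1) \<bullet> 1 = (\<Sum>b\<in>UNIV. w $ b) - m * real CARD('b)"
    by (simp add: inner_diff_left inner_one_vec sum_subtractf)
  also have "\<dots> = 0" by (simp add: m_def sum_divide_distrib[symmetric])
  finally show o: "(w - uniform_mat *v w) \<bullet> 1 = 0" by (simp add: u)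
  let ?p = "uniform_mat *v w"
  have "w \<bullet> w = (w - ?p) \<bullet> (w - ?p) + ?p \<bullet> ?p + 2 * ((w - ?p) \<bullet> ?p)"
    by (simp add: inner_diff_left inner_diff_right inner_commute algebra_simps)
  moreover have "(w - ?p) \<bullet> ?p = 0" using o by (simp add: u)
  ultimately have "(w - ?p) \<bullet> (w - ?p) \<le> w \<bullet> w" using inner_ge_zero[of ?p] by linarith
  thus "norm (w - uniform_mat *v w) \<le> norm w" by (simp add: norm_le)
qed

lemma doubly_stochastic_minus_uniform_norm_le:
  fixes A :: "real^'b::finite^'b"
  assumes ds: "doubly_stochastic A"
  shows "norm ((A - uniform_mat) *v w) \<le> sigma2 A * norm w"
proof -
  have "A *v (uniform_mat *v w) = uniform_mat *v w"
    by (simp add: uniform_mat_mult_vec matrix_vector_mult_scaleR doubly_stochastic_mult_one[OF ds])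
  hence "(A - uniform_mat) *v w = A *v (w - uniform_mat *v w)"
    by (simp add: matrix_vector_mult_diff_rdistrib matrix_vector_mult_diff_distrib)
  also have "norm \<dots> \<le> sigma2 A * norm (w - uniform_mat *v w)"
    by (rule doubly_stochastic_norm_le_sigma2[OF ds uniform_mat_complement(1)])
  also have "\<dots> \<le> sigma2 A * norm w"
    by (rule mult_left_mono[OF uniform_mat_complement(2) sigma2_nonneg])
  finally show ?thesis .
qed

section \<open>Block structure of \<open>I \<otimes> B\<close>\<close>

definition block :: "real^('v::finite \<times> 'b::finite) \<Rightarrow> 'v \<Rightarrow> real^'b" where
  "block x v = (\<chi> b. x $ (v, b))"

lemma sum_UNIV_prod: "(\<Sum>p\<in>UNIV. f p) = (\<Sum>v\<in>UNIV. \<Sum>b\<in>UNIV. f (v, b))"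
  by (simp add: sum.cartesian_product flip: UNIV_Times_UNIV)

lemma kron_id_mult_vec:
  fixes B :: "real^'b::finite^'b"
  shows "(kron (mat 1 :: real^'v::finite^'v) B *v x) $ (v, a) = (B *v block x v) $ a"
proof -
  have "(kron (mat 1 :: real^'v^'v) B *v x) $ (v, a) =
        (\<Sum>w\<in>UNIV. \<Sum>b\<in>UNIV. (if v = w then 1 else 0) * B $ a $ b * x $ (w, b))"
    by (simp add: kron_def matrix_vector_mult_def mat_def sum_UNIV_prod[where f = "\<lambda>p. _ p * x $ p"])
  also have "\<dots> = (\<Sum>w\<in>UNIV. if v = w then (\<Sum>b\<in>UNIV. B $ a $ b * x $ (w, b)) else 0)"
    by (rule sum.cong) auto
  also have "\<dots> = (B *v block x v) $ a" by (simp add: matrix_vector_mult_def block_def)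
  finally show ?thesis .
qed

lemma block_kron_id: "block (kron (mat 1 :: real^'v::finite^'v) (B :: real^'b::finite^'b) *v x) v = B *v block x v"
  by (simp add: vec_eq_iff kron_id_mult_vec block_def)

lemma inner_block_sum:
  fixes x y :: "real^('v::finite \<times> 'b::finite)"
  shows "x \<bullet> y = (\<Sum>v\<in>UNIV. block x v \<bullet> block y v)"
  by (simp add: inner_vec_def block_def sum_UNIV_prod[where f = "\<lambda>p. x $ p * y $ p"])

lemma kron_id_norm_le:
  fixes B :: "real^'b::finite^'b"
  assumes c: "0 \<le> c" and bound: "\<And>y. norm (B *v y) \<le> c * norm y"
  shows "norm (kron (mat 1 :: real^'v::finite^'v) B *v x) \<le> c * norm x"
proof -
  have "(kron (mat 1 :: real^'v^'v) B *v x) \<bullet> (kron (mat 1 :: real^'v^'v) B *v x)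
      = (\<Sum>v\<in>UNIV. (B *v block x v) \<bullet> (B *v block x v))"
    by (simp add: inner_block_sum[where 'v='v] block_kron_id)
  also have "\<dots> \<le> (\<Sum>v\<in>UNIV. c^2 * (block x v \<bullet> block x v))"
    using bound by (intro sum_mono) (simp add: norm_le_scaled_iff[OF c, symmetric])
  also have "\<dots> = c^2 * (x \<bullet> x)" by (simp add: inner_block_sum[where 'v='v] sum_distrib_left)
  finally show ?thesis by (simp add: norm_le_scaled_iff[OF c])
qed

lemma kron_id_doubly_stochastic_norm_le:
  fixes B :: "real^'b::finite^'b"
  assumes "doubly_stochastic B"
  shows "norm (kron (mat 1 :: real^'v::finite^'v) B *v x) \<le> norm x"
  using kron_id_norm_le[of 1 B x] doubly_stochastic_norm_le[OF assms] by simp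

lemma kron_add_right: "kron A (B + C) = kron A B + kron A C"
  by (simp add: vec_eq_iff kron_def algebra_simps)

section \<open>Rotation maps\<close>

lemma sum_by_fibres:
  fixes F :: "'b::finite \<Rightarrow> real" and g :: "'a::finite \<Rightarrow> 'b"
  shows "(\<Sum>x\<in>UNIV. F (g x)) = (\<Sum>y\<in>UNIV. real (card {x. g x = y}) * F y)"
proof -
  have "(\<Sum>x\<in>UNIV. F (g x)) = (\<Sum>y\<in>UNIV. \<Sum>x\<in>{x. x \<in> UNIV \<and> g x = y}. F (g x))"
    by (rule sum.group[symmetric]) auto
  also have "\<dots> = (\<Sum>y\<in>UNIV. \<Sum>x\<in>{x. g x = y}. F y)"
    by (intro sum.cong) auto
  finally show ?thesis by simp
qed

lemma perm_mat_mult_vec: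
  assumes inv: "\<And>x. f (f x) = x"
  shows "perm_mat f *v y = (\<chi> x. y $ f x)"
proof -
  have "(perm_mat f *v y) $ x = y $ f x" for x
  proof -
    have "(perm_mat f *v y) $ x = (\<Sum>z\<in>UNIV. (if x = f z then 1 else 0) * y $ z)"
      by (simp add: perm_mat_def matrix_vector_mult_def)
    also have "\<dots> = (\<Sum>z\<in>UNIV. if f x = z then y $ z else 0)"
      by (rule sum.cong) (auto, metis inv, metis inv)
    finally show ?thesis by simp
  qed
  thus ?thesis by (simp add: vec_eq_iff)
qed

lemma norm_perm_mat_mult_vec:
  fixes y :: "real^'a::finite"
  assumes inv: "\<And>x. f (f x) = x"
  shows "norm (perm_mat f *v y) = norm y"
proof -
  have "bij f" by (metis inv bij_betw_byWitness top_greatest)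
  hence "(\<Sum>x\<in>UNIV. (y $ f x)^2) = (\<Sum>x\<in>UNIV. (y $ x)^2)"
    by (rule sum.reindex_bij_betw)
  thus ?thesis by (simp add: norm_eq_sqrt_inner inner_self_vec perm_mat_mult_vec[OF inv])
qed

lemma Rot_fst: "fst (Rot rot i (v, a)) = fst (rot (v, a $ i))"
  by (simp add: Rot_def Let_def split: prod.splits)

lemma Rot_involution:
  assumes "rotation_map rot"
  shows "Rot rot i (Rot rot i p) = p"
proof -
  obtain v a where p: "p = (v, a)" by (cases p)
  obtain v' j' where r: "rot (v, a $ i) = (v', j')" by (cases "rot (v, a $ i)")
  have r2: "rot (v', j') = (v, a $ i)" using assms r unfolding rotation_map_def by metis
  have "Rot rot i (v, a) = (v', \<chi> k. if k = i then j' else a $ k)"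
    by (simp add: Rot_def r)
  moreover have "Rot rot i (v', \<chi> k. if k = i then j' else a $ k) = (v, a)"
    by (simp add: Rot_def r2 vec_eq_iff)
  ultimately show ?thesis by (simp add: p)
qed

lemma card_coordinate_fibre_eq:
  fixes i :: "'s::finite"
  shows "card {b :: 'l::finite^'s. b $ i = j} = card {b :: 'l^'s. b $ i = j'}"
proof -
  have "bij_betw (\<lambda>b. \<chi> k. if k = i then j' else b $ k) {b :: 'l^'s. b $ i = j} {b. b $ i = j'}"
    by (rule bij_betw_byWitness[where f' = "\<lambda>b. \<chi> k. if k = i then j else b $ k"])
       (auto simp: vec_eq_iff)
  thus ?thesis by (rule bij_betw_same_card)
qed

lemma mean_coordinate_function:
  fixes i :: "'s::finite" and F :: "'l::finite \<Rightarrow> real"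
  shows "(\<Sum>b\<in>UNIV. F (b $ i)) / real CARD('l^'s) = (\<Sum>j\<in>UNIV. F j) / real CARD('l)"
proof -
  obtain j0 :: 'l where True by blast
  define K where "K = card {b :: 'l^'s. b $ i = j0}"
  have fibre: "card {b :: 'l^'s. b $ i = j} = K" for j by (simp add: K_def card_coordinate_fibre_eq)
  have "(\<Sum>b\<in>UNIV. F (b $ i)) = real K * (\<Sum>j\<in>UNIV. F j)"
    using sum_by_fibres[of F "\<lambda>b :: 'l^'s. b $ i"] by (simp add: fibre sum_distrib_left)
  moreover have card: "real CARD('l^'s) = real K * real CARD('l)"
    using sum_by_fibres[of "\<lambda>_. (1::real)" "\<lambda>b :: 'l^'s. b $ i"] by (simp add: fibre)
  moreover have "K \<noteq> 0"
  proof
    assume "K = 0"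
    hence "real CARD('l^'s) = 0" using card by simp
    thus False by simp
  qed
  ultimately show ?thesis by simp
qed

lemma rotation_map_card_le:
  assumes rm: "rotation_map rot"
  shows "card {j. fst (rot (v, j)) = v'} \<le> card {j :: 'l::finite. fst (rot (v' :: 'v, j)) = v}"
proof (rule card_inj_on_le[where f = "\<lambda>j. snd (rot (v, j))"])
  have inv: "\<And>x. rot (rot x) = x" using rm unfolding rotation_map_def by blast
  show "inj_on (\<lambda>j. snd (rot (v, j))) {j. fst (rot (v, j)) = v'}"
  proof (rule inj_onI)
    fix j1 j2 assume "j1 \<in> {j. fst (rot (v, j)) = v'}" "j2 \<in> {j. fst (rot (v, j)) = v'}"
      and "snd (rot (v, j1)) = snd (rot (v, j2))"
    hence "rot (v, j1) = rot (v, j2)" by (simp add: prod_eq_iff)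
    thus "j1 = j2" using inv by (metis prod.inject)
  qed
  show "(\<lambda>j. snd (rot (v, j))) ` {j. fst (rot (v, j)) = v'} \<subseteq> {j. fst (rot (v', j)) = v}"
  proof
    fix y assume "y \<in> (\<lambda>j. snd (rot (v, j))) ` {j. fst (rot (v, j)) = v'}"
    then obtain j where "rot (v, j) = (v', y)" by (auto simp: prod_eq_iff)
    hence "rot (v', y) = (v, j)" using inv by metis
    thus "y \<in> {j. fst (rot (v', j)) = v}" by simp
  qed
qed simp

lemma rot_adj_mult_vec:
  fixes rot :: "'v::finite \<times> 'l::finite \<Rightarrow> 'v \<times> 'l"
  shows "(rot_adj rot *v z) $ v = (\<Sum>j\<in>UNIV. z $ fst (rot (v, j))) / real CARD('l)"
  using sum_by_fibres[of "\<lambda>v'. z $ v'" "\<lambda>j. fst (rot (v, j))"]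
  by (simp add: rot_adj_def matrix_vector_mult_def sum_divide_distrib)

lemma doubly_stochastic_rot_adj:
  fixes rot :: "'v::finite \<times> 'l::finite \<Rightarrow> 'v \<times> 'l"
  assumes rm: "rotation_map rot"
  shows "doubly_stochastic (rot_adj rot)"
proof -
  have row: "(\<Sum>v'\<in>UNIV. real (card {j. fst (rot (v, j)) = v'})) = real CARD('l)" for v
    using sum_by_fibres[of "\<lambda>_. (1::real)" "\<lambda>j. fst (rot (v, j))"] by simp
  have "card {j. fst (rot (v, j)) = v'} = card {j. fst (rot (v', j)) = v}" for v v'
    using rotation_map_card_le[OF rm, of v v'] rotation_map_card_le[OF rm, of v' v] by simp
  hence col: "(\<Sum>v\<in>UNIV. real (card {j. fst (rot (v, j)) = v'})) = real CARD('l)" for v'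
    using row[of v'] by simp
  show ?thesis
    unfolding doubly_stochastic_def rot_adj_def
    by (simp add: sum_divide_distrib[symmetric] row col)
qed

lemma doubly_stochastic_norm_adj:
  fixes m :: "'a::finite \<Rightarrow> 'a \<Rightarrow> nat"
  assumes rg: "regular_graph d m" and d: "d > 0"
  shows "doubly_stochastic (norm_adj d m)"
proof -
  have sym: "m x y = m y x" for x y
    using rg unfolding regular_graph_def by blast
  have row: "(\<Sum>y\<in>UNIV. real (m x y)) = real d" for x
  proof -
    have "(\<Sum>y\<in>UNIV. m x y) = d" using rg unfolding regular_graph_def by blast
    thus ?thesis by (simp flip: of_nat_sum)
  qed
  moreover have "(\<Sum>x\<in>UNIV. real (m x y)) = (\<Sum>x\<in>UNIV. real (m y x))" for y
    by (rule sum.cong) (simp_all add: sym[of _ y])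
  ultimately show ?thesis
    unfolding doubly_stochastic_def norm_adj_def using d
    by (simp add: sum_divide_distrib[symmetric])
qed

section \<open>The zig-zag decomposition\<close>

definition lift :: "real^'v::finite \<Rightarrow> real^('v \<times> 'b::finite)" where
  "lift z = (\<chi> p. z $ fst p)"

definition cloud_mean :: "real^('v::finite \<times> 'b::finite) \<Rightarrow> real^'v" where
  "cloud_mean x = (\<chi> v. (\<Sum>b\<in>UNIV. x $ (v, b)) / real CARD('b))"

lemma kron_uniform_mult_vec:
  fixes x :: "real^('v::finite \<times> 'b::finite)"
  shows "kron (mat 1 :: real^'v^'v) (uniform_mat :: real^'b^'b) *v x = lift (cloud_mean x)"
  by (simp add: vec_eq_iff kron_id_mult_vec uniform_mat_mult_vec block_def lift_def
      cloud_mean_def sum_divide_distrib)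

lemma cloud_mean_inner_one:
  fixes x :: "real^('v::finite \<times> 'b::finite)"
  assumes "x \<bullet> 1 = 0"
  shows "cloud_mean x \<bullet> 1 = 0"
  using assms
  by (simp add: cloud_mean_def inner_one_vec sum_UNIV_prod[where f = "\<lambda>p. x $ p"]
      flip: sum_divide_distrib)

lemma norm_lift: "norm (lift z :: real^('v::finite \<times> 'b::finite)) = sqrt (real CARD('b)) * norm z"
proof -
  have "(lift z :: real^('v \<times> 'b)) \<bullet> lift z = real CARD('b) * (z \<bullet> z)"
    by (simp add: inner_vec_def lift_def sum_UNIV_prod[where f = "\<lambda>p. z $ fst p * z $ fst p"]
        sum_distrib_left)
  thus ?thesis by (simp add: norm_eq_sqrt_inner real_sqrt_mult)
qed

lemma kron_uniform_perm_Rot_lift: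
  fixes rot :: "'v::finite \<times> 'l::finite \<Rightarrow> 'v \<times> 'l" and i :: "'s::finite"
  assumes rm: "rotation_map rot"
  shows "kron (mat 1 :: real^'v^'v) (uniform_mat :: real^('l^'s)^('l^'s)) *v (perm_mat (Rot rot i) *v lift z)
           = lift (rot_adj rot *v z)"
proof -
  have "cloud_mean (perm_mat (Rot rot i) *v lift z :: real^('v \<times> ('l^'s))) $ v = (rot_adj rot *v z) $ v" for v
    using mean_coordinate_function[of "\<lambda>j. z $ fst (rot (v, j))" i]
    by (simp add: cloud_mean_def perm_mat_mult_vec[OF Rot_involution[OF rm]] lift_def Rot_fst
        rot_adj_mult_vec)
  thus ?thesis by (simp add: kron_uniform_mult_vec vec_eq_iff lift_def)
qed

lemma kron_uniform_perm_Rot_kron_uniform_norm_le: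
  fixes rot :: "'v::finite \<times> 'l::finite \<Rightarrow> 'v \<times> 'l" and i :: "'s::finite"
  defines "J \<equiv> kron (mat 1 :: real^'v^'v) (uniform_mat :: real^('l^'s)^('l^'s))"
  assumes rm: "rotation_map rot" and x1: "x \<bullet> 1 = 0"
  shows "norm (J *v (perm_mat (Rot rot i) *v (J *v x))) \<le> sigma2 (rot_adj rot) * norm x"
proof -
  let ?c = "sqrt (real CARD('l^'s))"
  have Jx: "J *v x = lift (cloud_mean x)" unfolding J_def by (rule kron_uniform_mult_vec)
  have "norm (J *v (perm_mat (Rot rot i) *v (J *v x))) = ?c * norm (rot_adj rot *v cloud_mean x)"
    unfolding Jx unfolding J_def kron_uniform_perm_Rot_lift[OF rm] by (rule norm_lift)
  also have "\<dots> \<le> ?c * (sigma2 (rot_adj rot) * norm (cloud_mean x))"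
    by (intro mult_left_mono doubly_stochastic_norm_le_sigma2 doubly_stochastic_rot_adj rm
        cloud_mean_inner_one x1) simp
  also have "\<dots> = sigma2 (rot_adj rot) * norm (J *v x)"
    by (simp add: Jx norm_lift)
  also have "\<dots> \<le> sigma2 (rot_adj rot) * norm x"
    unfolding J_def
    by (intro mult_left_mono kron_id_doubly_stochastic_norm_le doubly_stochastic_uniform_mat
        sigma2_nonneg)
  finally show ?thesis .
qed


lemma zigzag_norm_le:
  fixes rot :: "'v::finite \<times> 'l::finite \<Rightarrow> 'v \<times> 'l" and i :: "'s::finite"
    and A :: "real^('l^'s)^('l^'s)"
  defines "N \<equiv> kron (mat 1 :: real^'v^'v) A"
  assumes rm: "rotation_map rot" and ds: "doubly_stochastic A" and x1: "x \<bullet> 1 = 0"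
  shows "norm ((N ** perm_mat (Rot rot i) ** N) *v x) \<le> (sigma2 (rot_adj rot) + 2 * sigma2 A) * norm x"
proof -
  define J where "J = kron (mat 1 :: real^'v^'v) (uniform_mat :: real^('l^'s)^('l^'s))"
  define E where "E = kron (mat 1 :: real^'v^'v) (A - uniform_mat)"
  define P where "P = perm_mat (Rot rot i)"
  have NJE: "N *v y = J *v y + E *v y" for y
    unfolding N_def J_def E_def by (simp flip: matrix_vector_mult_add_rdistrib kron_add_right)
  have N: "norm (N *v y) \<le> norm y" for y
    unfolding N_def by (rule kron_id_doubly_stochastic_norm_le[OF ds])
  have J: "norm (J *v y) \<le> norm y" for y
    unfolding J_def by (rule kron_id_doubly_stochastic_norm_le[OF doubly_stochastic_uniform_mat])
  have E: "norm (E *v y) \<le> sigma2 A * norm y" for y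
    unfolding E_def
    by (intro kron_id_norm_le sigma2_nonneg doubly_stochastic_minus_uniform_norm_le[OF ds])
  have P: "norm (P *v y) = norm y" for y
    unfolding P_def by (rule norm_perm_mat_mult_vec[OF Rot_involution[OF rm]])
  have "(N ** P ** N) *v x = J *v (P *v (J *v x)) + E *v (P *v (J *v x)) + N *v (P *v (E *v x))"
    by (simp add: matrix_vector_mul_assoc[symmetric] matrix_mul_assoc NJE matrix_vector_right_distrib)
  also have "norm \<dots> \<le> norm (J *v (P *v (J *v x))) + norm (E *v (P *v (J *v x))) + norm (N *v (P *v (E *v x)))"
    by (rule order_trans[OF norm_triangle_ineq add_right_mono[OF norm_triangle_ineq]])
  also have "\<dots> \<le> sigma2 (rot_adj rot) * norm x + sigma2 A * norm x + sigma2 A * norm x"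
  proof (intro add_mono)
    show "norm (J *v (P *v (J *v x))) \<le> sigma2 (rot_adj rot) * norm x"
      unfolding J_def P_def by (rule kron_uniform_perm_Rot_kron_uniform_norm_le[OF rm x1])
    show "norm (E *v (P *v (J *v x))) \<le> sigma2 A * norm x"
      using E[of "P *v (J *v x)"] J[of x] sigma2_nonneg[of A] by (simp add: P order_trans mult_left_mono)
    show "norm (N *v (P *v (E *v x))) \<le> sigma2 A * norm x"
      using N[of "P *v (E *v x)"] E[of x] by (simp add: P)
  qed
  finally show ?thesis by (simp add: P_def algebra_simps)
qed

theorem mainTheorem8:
  fixes rot :: "'v::finite \<times> 'l::finite \<Rightarrow> 'v \<times> 'l"
    and mH :: "'l^'s::finite \<Rightarrow> 'l^'s \<Rightarrow> nat"
    and d2 :: nat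
    and i :: 's
  assumes "rotation_map rot"
    and "locally_invertible rot"
    and "regular_graph d2 mH"
    and "d2 > 0"
  shows "sigma2 (kron (mat 1 :: real^'v^'v) (norm_adj d2 mH) ** perm_mat (Rot rot i)
                  ** kron (mat 1 :: real^'v^'v) (norm_adj d2 mH))
         \<le> sigma2 (rot_adj rot) + 2 * sigma2 (norm_adj d2 mH) + (sigma2 (norm_adj d2 mH))\<^sup>2"
proof (rule sigma2_le_if_norm_le_on_hyperplane[where u = 1])
  let ?g = "sigma2 (rot_adj rot)" and ?h = "sigma2 (norm_adj d2 mH)"
  let ?X = "kron (mat 1 :: real^'v^'v) (norm_adj d2 mH) ** perm_mat (Rot rot i)
              ** kron (mat 1 :: real^'v^'v) (norm_adj d2 mH)"
  have ds: "doubly_stochastic (norm_adj d2 mH)"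
    using assms(3,4) by (rule doubly_stochastic_norm_adj)
  show "0 \<le> ?g + 2 * ?h + ?h\<^sup>2"
    using sigma2_nonneg[of "rot_adj rot"] sigma2_nonneg[of "norm_adj d2 mH"] by simp
  fix x :: "real^('v \<times> ('l^'s))"
  assume "x \<bullet> 1 = 0"
  hence "norm (?X *v x) \<le> (?g + 2 * ?h) * norm x"
    by (rule zigzag_norm_le[OF assms(1) ds])
  also have "\<dots> \<le> (?g + 2 * ?h + ?h\<^sup>2) * norm x"
    by (simp add: mult_right_mono)
  finally show "norm (?X *v x) \<le> (?g + 2 * ?h + ?h\<^sup>2) * norm x" .
qed

end
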